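(* Let $(\Omega,\mathcal F)$ be a measurable space with $\Sigma\neq\emptyset$, and let $v:\mathcal F\to\mathbb R$ be a non-decreasing and continuous set function with $v(\emptyset)=0$. Then the following are equivalent. (a) $v$ is supermodular: $v(A)+v(B)\le v(A\cup B)+v(A\cap B)$ for all $A,B\in\mathcal F$. (b) For every $\mathcal I\in\Sigma$, $\mu_{v,\mathcal I}\in\mathcal C_{+,v}(\Omega)$, where $\mathcal C_{+,v}(\Omega)=\{\mu\in\mathcal M(\Omega)\mid\mu(\Omega)=v(\Omega),\ \mu(B)\ge v(B)\ \forall B\in\mathcal F\}$. (c) $v(A)=\inf_{\mathcal I\in\Sigma}\mu_{v,\mathcal I}(A)$ for all $A\in\mathcal F$. (d) For all $A,B\in\mathcal F$ with $B\subset A$, $v(B)=\inf_{\mu\in\mathcal C_{+,v}(A)}\mu(B)$, where $\mathcal C_{+,v}(A)=\{\mu\in\mathcal M(A)\mid \mu(A)=v(A),\ \mu(B')\ge v(B')\ \forall B'\in\mathcal F,\ B'\subset A\}$.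
   Context: $\Sigma$ denotes the set of all classes $\mathcal I\subset\mathcal F$ that are chains (totally ordered by inclusion), contain $\emptyset$ and $\Omega$, and generate $\mathcal F$ as a $\sigma$-algebra. $\mathcal M(A)$ is the set of finite measures on $(A,\mathcal F|_A)$. $v$ is non-decreasing if $v(A)\le v(B)$ for $A\subset B$. For $\mathcal I\in\Sigma$ let $\mathcal J$ be the algebra generated by $\mathcal I$, whose elements are the sets $\bigcup_{i=1}^n (C_i\cap D_i^c)$ with $C_1\supset D_1\supset\cdots\supset C_n\supset D_n$ in $\mathcal I$; define $\mu_{v,\mathcal I}(\bigcup_{i=1}^n (C_i\cap D_i^c))=\sum_{i=1}^n(v(C_i)-v(D_i))$. $v$ is continuous if for every $\mathcal I\in\Sigma$ this $\mu_{v,\mathcal I}$ is $\sigma$-additive on $\mathcal J$; it then extends uniquely to a measure on $\mathcal F$, again denoted $\mu_{v,\mathcal I}$ (the extremal measure). *)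

theory Defs
  imports "HOL-Analysis.Analysis"
begin

definition chains_Sigma :: "'a measure \<Rightarrow> 'a set set set" where
  "chains_Sigma M = {I. I \<subseteq> sets M \<and> (\<forall>C\<in>I. \<forall>D\<in>I. C \<subseteq> D \<or> D \<subseteq> C)
      \<and> {} \<in> I \<and> space M \<in> I \<and> sigma_sets (space M) I = sets M}"

definition chain_rep :: "'a set set \<Rightarrow> nat \<Rightarrow> (nat \<Rightarrow> 'a set) \<Rightarrow> (nat \<Rightarrow> 'a set) \<Rightarrow> bool" where
  "chain_rep I n C D \<longleftrightarrow> (\<forall>i<n. C i \<in> I \<and> D i \<in> I \<and> D i \<subseteq> C i)
      \<and> (\<forall>i. Suc i < n \<longrightarrow> C (Suc i) \<subseteq> D i)"

definition gen_alg :: "'a measure \<Rightarrow> 'a set set \<Rightarrow> 'a set set" where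
  "gen_alg M I = {A. \<exists>n C D. chain_rep I n C D \<and> A = (\<Union>i<n. C i \<inter> (space M - D i))}"

definition mu_alg :: "'a measure \<Rightarrow> ('a set \<Rightarrow> real) \<Rightarrow> 'a set set \<Rightarrow> 'a set \<Rightarrow> real" where
  "mu_alg M v I A = (THE x. \<exists>n C D. chain_rep I n C D \<and> A = (\<Union>i<n. C i \<inter> (space M - D i))
       \<and> x = (\<Sum>i<n. v (C i) - v (D i)))"

definition nondecreasing_sf :: "'a measure \<Rightarrow> ('a set \<Rightarrow> real) \<Rightarrow> bool" where
  "nondecreasing_sf M v \<longleftrightarrow> (\<forall>A\<in>sets M. \<forall>B\<in>sets M. A \<subseteq> B \<longrightarrow> v A \<le> v B)"

definition continuous_sf :: "'a measure \<Rightarrow> ('a set \<Rightarrow> real) \<Rightarrow> bool" where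
  "continuous_sf M v \<longleftrightarrow> (\<forall>I\<in>chains_Sigma M. \<forall>F :: nat \<Rightarrow> 'a set.
      range F \<subseteq> gen_alg M I \<longrightarrow> disjoint_family F \<longrightarrow> (\<Union>n. F n) \<in> gen_alg M I \<longrightarrow>
      (\<lambda>n. mu_alg M v I (F n)) sums mu_alg M v I (\<Union>n. F n))"

definition extremal_measure :: "'a measure \<Rightarrow> ('a set \<Rightarrow> real) \<Rightarrow> 'a set set \<Rightarrow> 'a measure" where
  "extremal_measure M v I = (THE N. sets N = sets M \<and> finite_measure N
      \<and> (\<forall>A\<in>gen_alg M I. measure N A = mu_alg M v I A))"

definition supermodular_sf :: "'a measure \<Rightarrow> ('a set \<Rightarrow> real) \<Rightarrow> bool" where
  "supermodular_sf M v \<longleftrightarrow> (\<forall>A\<in>sets M. \<forall>B\<in>sets M. v A + v B \<le> v (A \<union> B) + v (A \<inter> B))"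

definition core_plus :: "'a measure \<Rightarrow> ('a set \<Rightarrow> real) \<Rightarrow> 'a set \<Rightarrow> 'a measure set" where
  "core_plus M v A = {N. sets N = sets (restrict_space M A) \<and> finite_measure N
      \<and> measure N A = v A \<and> (\<forall>B\<in>sets M. B \<subseteq> A \<longrightarrow> measure N B \<ge> v B)}"

end

theory Submission
  imports Defs
begin

text \<open>
  A set of the algebra J generated by a chain I has many representations as a disjoint union of
  differences C i - D i of members of I. Splitting a representation at a member E of I splits its
  sum into the sums of the parts inside and outside E; cutting at D 0 reduces the length, so all
  representations have the same sum and mu_{v,I} is well defined. On members of I the extremal
  measure agrees with v, and every pair B \<subseteq> A of measurable sets lies in some chain of Sigma.

  The heart of the matter is that v is supermodular iff mu_{v,I} \<ge> v for every I. If the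
  inequality holds, take I through A \<inter> B \<subseteq> A \<union> B; additivity of mu_{v,I} gives
  v A + v B \<le> mu_{v,I}(A) + mu_{v,I}(B) = v (A \<union> B) + v (A \<inter> B). Conversely, given B and I,
  refine I to a chain I' through B containing B \<inter> C for all C \<in> I. Supermodularity gives
  mu_{v,I}(C - D) \<ge> mu_{v,I'}((C - D) \<inter> B) on the differences of members of I; these form a
  semiring generating the sigma-algebra, so the inequality between the two measures extends to all
  measurable sets, and at B it reads mu_{v,I}(B) \<ge> mu_{v,I'}(B) = v B.

  Statement (b) is this inequality, and in (c) the infimum is attained by any chain through A.
  In (d), restricting mu_{v,I} for a chain through B \<subseteq> A gives an element of C_{+,v}(A) taking
  the value v B at B; conversely, additivity of any element of C_{+,v}(A \<union> B) yields
  supermodularity as above.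
\<close>

section \<open>Sums over chain representations\<close>

definition chain_rep_set :: "nat \<Rightarrow> (nat \<Rightarrow> 'a set) \<Rightarrow> (nat \<Rightarrow> 'a set) \<Rightarrow> 'a set" where
  "chain_rep_set n C D = (\<Union>i<n. C i - D i)"

definition chain_rep_sum ::
    "('a set \<Rightarrow> real) \<Rightarrow> nat \<Rightarrow> (nat \<Rightarrow> 'a set) \<Rightarrow> (nat \<Rightarrow> 'a set) \<Rightarrow> real" where
  "chain_rep_sum v n C D = (\<Sum>i<n. v (C i) - v (D i))"

lemma chain_subset_Int: "chain\<^sub>\<subseteq> I \<Longrightarrow> C \<in> I \<Longrightarrow> E \<in> I \<Longrightarrow> C \<inter> E \<in> I"
  unfolding chain_subset_def by (metis Int_absorb1 Int_absorb2)

lemma chain_subset_Un: "chain\<^sub>\<subseteq> I \<Longrightarrow> C \<in> I \<Longrightarrow> E \<in> I \<Longrightarrow> C \<union> E \<in> I"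
  unfolding chain_subset_def by (metis Un_absorb1 Un_absorb2)

lemma chain_rep_nested:
  assumes "chain_rep I n C D" "i < j" "j < n"
  shows "C j \<subseteq> D i"
  using assms(2,3)
proof (induction j)
  case 0
  then show ?case by simp
next
  case (Suc j)
  have "D j \<subseteq> C j" "C (Suc j) \<subseteq> D j"
    using assms(1) Suc.prems unfolding chain_rep_def by auto
  then show ?case
    using Suc by (cases "i = j") auto
qed

lemma chain_rep_pairwise_disjnt:
  assumes "chain_rep I n C D"
  shows "pairwise (\<lambda>i j. disjnt (C i - D i) (C j - D j)) {..<n}"
proof -
  have "disjnt (C i - D i) (C j - D j)" if "i < j" "j < n" for i j
    using chain_rep_nested[OF assms that] unfolding disjnt_def by blast
  then show ?thesis
    unfolding pairwise_def by (metis disjnt_sym lessThan_iff linorder_neqE_nat)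
qed

lemma chain_rep_Suc:
  assumes "chain_rep I (Suc n) C D"
  shows "chain_rep I n (\<lambda>i. C (Suc i)) (\<lambda>i. D (Suc i))"
    and "chain_rep_set (Suc n) C D = (C 0 - D 0) \<union> chain_rep_set n (\<lambda>i. C (Suc i)) (\<lambda>i. D (Suc i))"
    and "chain_rep_set n (\<lambda>i. C (Suc i)) (\<lambda>i. D (Suc i)) \<subseteq> D 0"
    and "chain_rep_sum v (Suc n) C D
           = v (C 0) - v (D 0) + chain_rep_sum v n (\<lambda>i. C (Suc i)) (\<lambda>i. D (Suc i))"
proof -
  show "chain_rep I n (\<lambda>i. C (Suc i)) (\<lambda>i. D (Suc i))"
    using assms unfolding chain_rep_def by auto
  show "chain_rep_set (Suc n) C D = (C 0 - D 0) \<union> chain_rep_set n (\<lambda>i. C (Suc i)) (\<lambda>i. D (Suc i))"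
    unfolding chain_rep_set_def by (simp add: lessThan_Suc_eq_insert_0 image_Suc_lessThan[symmetric])
  have "C (Suc i) \<subseteq> D 0" if "i < n" for i
    by (rule chain_rep_nested[OF assms]) (use that in auto)
  then show "chain_rep_set n (\<lambda>i. C (Suc i)) (\<lambda>i. D (Suc i)) \<subseteq> D 0"
    unfolding chain_rep_set_def by blast
  show "chain_rep_sum v (Suc n) C D
          = v (C 0) - v (D 0) + chain_rep_sum v n (\<lambda>i. C (Suc i)) (\<lambda>i. D (Suc i))"
    unfolding chain_rep_sum_def by (simp only: sum.lessThan_Suc_shift)
qed

lemma chain_rep_sum_empty:
  assumes "chain_rep I n C D" "chain_rep_set n C D = {}"
  shows "chain_rep_sum v n C D = 0"
proof -
  have "C i = D i" if "i < n" for i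
    using assms that unfolding chain_rep_def chain_rep_set_def by blast
  then show ?thesis
    unfolding chain_rep_sum_def by simp
qed

lemma chain_rep_split:
  assumes "chain_rep I n C D" "chain\<^sub>\<subseteq> I" "E \<in> I"
  shows "chain_rep I n (\<lambda>i. C i \<inter> E) (\<lambda>i. D i \<inter> E)"
    and "chain_rep I n (\<lambda>i. C i \<union> E) (\<lambda>i. D i \<union> E)"
    and "chain_rep_set n (\<lambda>i. C i \<inter> E) (\<lambda>i. D i \<inter> E) = chain_rep_set n C D \<inter> E"
    and "chain_rep_set n (\<lambda>i. C i \<union> E) (\<lambda>i. D i \<union> E) = chain_rep_set n C D - E"
    and "chain_rep_sum v n C D = chain_rep_sum v n (\<lambda>i. C i \<inter> E) (\<lambda>i. D i \<inter> E)
                                 + chain_rep_sum v n (\<lambda>i. C i \<union> E) (\<lambda>i. D i \<union> E)"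
proof -
  show "chain_rep I n (\<lambda>i. C i \<inter> E) (\<lambda>i. D i \<inter> E)" "chain_rep I n (\<lambda>i. C i \<union> E) (\<lambda>i. D i \<union> E)"
    using assms chain_subset_Int chain_subset_Un unfolding chain_rep_def by blast+
  show "chain_rep_set n (\<lambda>i. C i \<inter> E) (\<lambda>i. D i \<inter> E) = chain_rep_set n C D \<inter> E"
    "chain_rep_set n (\<lambda>i. C i \<union> E) (\<lambda>i. D i \<union> E) = chain_rep_set n C D - E"
    unfolding chain_rep_set_def by blast+
  have "v (C i) - v (D i) = (v (C i \<inter> E) - v (D i \<inter> E)) + (v (C i \<union> E) - v (D i \<union> E))"
    if "i < n" for i
  proof -
    have "C i \<in> I" "D i \<in> I" "D i \<subseteq> C i"
      using assms(1) that unfolding chain_rep_def by auto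
    then have "(C i \<subseteq> E \<or> E \<subseteq> C i) \<and> (D i \<subseteq> E \<or> E \<subseteq> D i)"
      using assms(2,3) unfolding chain_subset_def by blast
    then show ?thesis
      using \<open>D i \<subseteq> C i\<close> by (auto simp: Int_absorb1 Int_absorb2 Un_absorb1 Un_absorb2)
  qed
  then show "chain_rep_sum v n C D = chain_rep_sum v n (\<lambda>i. C i \<inter> E) (\<lambda>i. D i \<inter> E)
                                      + chain_rep_sum v n (\<lambda>i. C i \<union> E) (\<lambda>i. D i \<union> E)"
    unfolding chain_rep_sum_def by (simp add: sum.distrib[symmetric])
qed

lemma chain_rep_sum_telescope:
  assumes "chain_rep I n C D" "Y \<subseteq> X" "\<And>i. i < n \<Longrightarrow> Y \<subseteq> D i \<and> C i \<subseteq> X"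
    and "chain_rep_set n C D = X - Y"
  shows "chain_rep_sum v n C D = v X - v Y"
  using assms
proof (induction n arbitrary: C D X)
  case 0
  then have "X = Y"
    by (auto simp: chain_rep_set_def)
  then show ?case
    by (simp add: chain_rep_sum_def)
next
  case (Suc n)
  note first = chain_rep_Suc[OF Suc.prems(1)]
  have "D 0 \<subseteq> C 0"
    using Suc.prems(1) unfolding chain_rep_def by auto
  moreover have "Y \<subseteq> D 0" "C 0 \<subseteq> X"
    using Suc.prems(3)[of 0] by auto
  ultimately have C0: "C 0 = X" and rest: "chain_rep_set n (\<lambda>i. C (Suc i)) (\<lambda>i. D (Suc i)) = D 0 - Y"
    using first(2,3) Suc.prems(4) by blast+
  have "chain_rep_sum v n (\<lambda>i. C (Suc i)) (\<lambda>i. D (Suc i)) = v (D 0) - v Y"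
  proof (rule Suc.IH[OF first(1) \<open>Y \<subseteq> D 0\<close> _ rest])
    fix i
    assume "i < n"
    then show "Y \<subseteq> D (Suc i) \<and> C (Suc i) \<subseteq> D 0"
      using Suc.prems(3)[of "Suc i"] chain_rep_nested[OF Suc.prems(1), of 0 "Suc i"] by simp
  qed
  then show ?case
    using first(4) C0 by simp
qed

lemma chain_rep_sum_Diff:
  assumes "chain_rep I n C D" "chain\<^sub>\<subseteq> I" "X \<in> I" "Y \<in> I" "Y \<subseteq> X"
    and "chain_rep_set n C D = X - Y"
  shows "chain_rep_sum v n C D = v X - v Y"
proof -
  \<comment> \<open>Cutting at X and then at Y leaves a representation squeezed between Y and X.\<close>
  note at_X = chain_rep_split[OF assms(1-3)]
  note at_Y = chain_rep_split[OF at_X(1) assms(2,4)]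
  have outside_X: "chain_rep_sum v n (\<lambda>i. C i \<union> X) (\<lambda>i. D i \<union> X) = 0"
    by (rule chain_rep_sum_empty[OF at_X(2)]) (simp add: at_X(4) assms(6))
  have inside_Y: "chain_rep_sum v n (\<lambda>i. C i \<inter> X \<inter> Y) (\<lambda>i. D i \<inter> X \<inter> Y) = 0"
    by (rule chain_rep_sum_empty[OF at_Y(1)]) (auto simp: at_Y(3) at_X(3) assms(6))
  have between: "chain_rep_sum v n (\<lambda>i. C i \<inter> X \<union> Y) (\<lambda>i. D i \<inter> X \<union> Y) = v X - v Y"
  proof (rule chain_rep_sum_telescope[OF at_Y(2) assms(5)])
    fix i
    assume "i < n"
    then have "D i \<subseteq> C i"
      using assms(1) unfolding chain_rep_def by auto
    then show "Y \<subseteq> D i \<inter> X \<union> Y \<and> C i \<inter> X \<union> Y \<subseteq> X"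
      using assms(5) by auto
  next
    show "chain_rep_set n (\<lambda>i. C i \<inter> X \<union> Y) (\<lambda>i. D i \<inter> X \<union> Y) = X - Y"
      using at_Y(4) at_X(3) assms(6) by auto
  qed
  show ?thesis
    using at_X(5) at_Y(5) outside_X inside_Y between by simp
qed

lemma chain_rep_sum_unique:
  assumes "chain_rep I n C D" "chain_rep I m C' D'" "chain\<^sub>\<subseteq> I"
    and "chain_rep_set n C D = chain_rep_set m C' D'"
  shows "chain_rep_sum v n C D = chain_rep_sum v m C' D'"
  using assms
proof (induction n arbitrary: C D C' D')
  case 0
  then show ?case
    using chain_rep_sum_empty[OF "0.prems"(2)] by (simp add: chain_rep_set_def chain_rep_sum_def)
next
  case (Suc n)
  have "C 0 \<in> I" "D 0 \<in> I" "D 0 \<subseteq> C 0"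
    using Suc.prems(1) unfolding chain_rep_def by auto
  \<comment> \<open>Cut the second representation at D 0: inside D 0 it represents the tail of the
    first one, outside D 0 it represents C 0 - D 0.\<close>
  note first = chain_rep_Suc[OF Suc.prems(1)]
  note at_D0 = chain_rep_split[OF Suc.prems(2,3) \<open>D 0 \<in> I\<close>]
  have "chain_rep_set n (\<lambda>i. C (Suc i)) (\<lambda>i. D (Suc i))
          = chain_rep_set m (\<lambda>i. C' i \<inter> D 0) (\<lambda>i. D' i \<inter> D 0)"
    using at_D0(3) Suc.prems(4) first(2,3) by blast
  then have "chain_rep_sum v n (\<lambda>i. C (Suc i)) (\<lambda>i. D (Suc i))
               = chain_rep_sum v m (\<lambda>i. C' i \<inter> D 0) (\<lambda>i. D' i \<inter> D 0)"
    by (rule Suc.IH[OF first(1) at_D0(1) Suc.prems(3)])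
  moreover have "chain_rep_set m (\<lambda>i. C' i \<union> D 0) (\<lambda>i. D' i \<union> D 0) = C 0 - D 0"
    using at_D0(4) Suc.prems(4) first(2,3) by blast
  then have "chain_rep_sum v m (\<lambda>i. C' i \<union> D 0) (\<lambda>i. D' i \<union> D 0) = v (C 0) - v (D 0)"
    by (rule chain_rep_sum_Diff[OF at_D0(2) Suc.prems(3) \<open>C 0 \<in> I\<close> \<open>D 0 \<in> I\<close> \<open>D 0 \<subseteq> C 0\<close>])
  ultimately show ?case
    using first(4) at_D0(5) by simp
qed

lemma chain_rep_set_eq_UN_Int:
  assumes "chain_rep I n C D" "I \<subseteq> Pow \<Omega>"
  shows "chain_rep_set n C D = (\<Union>i<n. C i \<inter> (\<Omega> - D i))"
  using assms unfolding chain_rep_def chain_rep_set_def by blast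

lemma gen_alg_eq:
  assumes "I \<subseteq> Pow (space M)"
  shows "gen_alg M I = {chain_rep_set n C D | n C D. chain_rep I n C D}"
  using chain_rep_set_eq_UN_Int[OF _ assms] unfolding gen_alg_def by blast

lemma mu_alg_chain_rep_set:
  assumes "chain_rep I n C D" "chain\<^sub>\<subseteq> I" "I \<subseteq> Pow (space M)"
  shows "mu_alg M v I (chain_rep_set n C D) = chain_rep_sum v n C D"
  unfolding mu_alg_def
proof (rule the_equality)
  show "\<exists>n' C' D'. chain_rep I n' C' D' \<and> chain_rep_set n C D = (\<Union>i<n'. C' i \<inter> (space M - D' i))
          \<and> chain_rep_sum v n C D = (\<Sum>i<n'. v (C' i) - v (D' i))"
    using assms(1) chain_rep_set_eq_UN_Int[OF assms(1,3)] unfolding chain_rep_sum_def by metis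
next
  fix x
  assume "\<exists>n' C' D'. chain_rep I n' C' D' \<and> chain_rep_set n C D = (\<Union>i<n'. C' i \<inter> (space M - D' i))
           \<and> x = (\<Sum>i<n'. v (C' i) - v (D' i))"
  then obtain n' C' D' where "chain_rep I n' C' D'" "chain_rep_set n C D = chain_rep_set n' C' D'"
      "x = chain_rep_sum v n' C' D'"
    using chain_rep_set_eq_UN_Int[OF _ assms(3)] unfolding chain_rep_sum_def by metis
  then show "x = chain_rep_sum v n C D"
    using chain_rep_sum_unique[OF assms(1) _ assms(2)] by metis
qed

section \<open>Differences of chain members\<close>

definition chain_diffs :: "'a set set \<Rightarrow> 'a set set" where
  "chain_diffs I = {C - D | C D. C \<in> I \<and> D \<in> I \<and> D \<subseteq> C}"

lemma chain_diffsE: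
  assumes "s \<in> chain_diffs I"
  obtains C D where "s = C - D" "C \<in> I" "D \<in> I" "D \<subseteq> C"
  using assms unfolding chain_diffs_def by blast

lemma Diff_in_chain_diffs:
  assumes "chain\<^sub>\<subseteq> I" "C \<in> I" "E \<in> I"
  shows "C - E \<in> chain_diffs I"
proof -
  have "C - E = C - C \<inter> E"
    by blast
  then show ?thesis
    using chain_subset_Int[OF assms] assms(2) unfolding chain_diffs_def by blast
qed

lemma semiring_of_sets_chain_diffs:
  assumes "chain\<^sub>\<subseteq> I" "I \<subseteq> Pow \<Omega>" "{} \<in> I"
  shows "semiring_of_sets \<Omega> (chain_diffs I)"
proof
  show "chain_diffs I \<subseteq> Pow \<Omega>"
    using assms(2) unfolding chain_diffs_def by auto
  show "{} \<in> chain_diffs I"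
    using Diff_in_chain_diffs[OF assms(1,3,3)] by simp
next
  fix a b
  assume "a \<in> chain_diffs I" "b \<in> chain_diffs I"
  then obtain C D C' D' where ab: "a = C - D" "b = C' - D'" "C \<in> I" "D \<in> I" "C' \<in> I" "D' \<in> I"
      "D' \<subseteq> C'"
    unfolding chain_diffs_def by blast
  have "a \<inter> b = (C \<inter> C') - (D \<union> D')"
    using ab by blast
  then show "a \<inter> b \<in> chain_diffs I"
    using Diff_in_chain_diffs chain_subset_Int chain_subset_Un assms(1) ab by metis
  let ?P = "C - (D \<union> C')" and ?Q = "(C \<inter> D') - D"
  have "a - b = ?P \<union> ?Q" "disjoint {?P, ?Q}"
    using ab unfolding disjoint_def by blast+
  moreover have "?P \<in> chain_diffs I" "?Q \<in> chain_diffs I"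
    using Diff_in_chain_diffs chain_subset_Int chain_subset_Un assms(1) ab by metis+
  ultimately show "\<exists>Cs\<subseteq>chain_diffs I. finite Cs \<and> disjoint Cs \<and> a - b = \<Union>Cs"
    by (intro exI[of _ "{?P, ?Q}"]) auto
qed

lemma sigma_sets_chain_diffs:
  assumes "I \<subseteq> Pow \<Omega>" "{} \<in> I"
  shows "sigma_sets \<Omega> (chain_diffs I) = sigma_sets \<Omega> I"
proof (rule sigma_sets_eqI)
  interpret sigma_algebra \<Omega> "sigma_sets \<Omega> I"
    using assms(1) by (rule sigma_algebra_sigma_sets)
  fix a
  assume "a \<in> chain_diffs I"
  then show "a \<in> sigma_sets \<Omega> I"
    unfolding chain_diffs_def by (auto intro: Diff)
next
  fix b
  assume "b \<in> I"
  then have "b - {} \<in> chain_diffs I"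
    using assms(2) unfolding chain_diffs_def by blast
  then show "b \<in> sigma_sets \<Omega> (chain_diffs I)"
    by auto
qed

section \<open>Comparing finite measures on a generating semiring\<close>

lemma semiring_premeasure_extension:
  assumes "semiring_of_sets \<Omega> S" "\<Omega> \<in> S" "f {} = 0" "\<And>s. s \<in> S \<Longrightarrow> 0 \<le> f s"
    and "\<And>F. range F \<subseteq> S \<Longrightarrow> disjoint_family F \<Longrightarrow> (\<Union>n. F n) \<in> S \<Longrightarrow>
           (\<lambda>n. f (F n)) sums f (\<Union>n. F n)"
  obtains N where "sets N = sigma_sets \<Omega> S" "finite_measure N" "\<And>s. s \<in> S \<Longrightarrow> measure N s = f s"
proof -
  interpret semiring_of_sets \<Omega> S by fact
  have positive: "positive S (\<lambda>s. ennreal (f s))"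
    unfolding positive_def using assms(3) by simp
  have additive: "countably_additive S (\<lambda>s. ennreal (f s))"
    unfolding countably_additive_def
  proof (intro allI impI)
    fix F :: "nat \<Rightarrow> 'a set"
    assume F: "range F \<subseteq> S" "disjoint_family F" "\<Union> (range F) \<in> S"
    then have sums: "(\<lambda>n. f (F n)) sums f (\<Union>n. F n)"
      using assms(5) by simp
    have nonneg: "0 \<le> f (F n)" for n
      using F(1) assms(4) by auto
    show "(\<Sum>n. ennreal (f (F n))) = ennreal (f (\<Union> (range F)))"
      using suminf_ennreal2[OF nonneg sums_summable[OF sums]] sums_unique[OF sums] by simp
  qed
  obtain \<mu> where \<mu>: "\<forall>s\<in>S. \<mu> s = ennreal (f s)" "measure_space \<Omega> (sigma_sets \<Omega> S) \<mu>"
    using caratheodory[OF positive additive] by blast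
  interpret \<Omega>: sigma_algebra \<Omega> "sigma_sets \<Omega> S"
    using \<mu>(2) by (simp add: measure_space_def)
  define N where "N = measure_of \<Omega> (sigma_sets \<Omega> S) \<mu>"
  have emeasure_N: "emeasure N s = ennreal (f s)" if "s \<in> S" for s
  proof -
    have "emeasure N s = \<mu> s"
      unfolding N_def using \<mu>(2) that
      by (intro emeasure_measure_of_sigma) (auto simp: measure_space_def)
    then show ?thesis
      using \<mu>(1) that by simp
  qed
  show ?thesis
  proof
    show "sets N = sigma_sets \<Omega> S"
      unfolding N_def by simp
    show "finite_measure N"
      using emeasure_N[OF assms(2)] by (intro finite_measureI) (simp add: N_def)
    show "measure N s = f s" if "s \<in> S" for s
      using emeasure_N[OF that] assms(4)[OF that] by (simp add: measure_def)
  qed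
qed

lemma semiring_of_sets_Int_stable:
  assumes "semiring_of_sets \<Omega> S"
  shows "Int_stable S" "S \<subseteq> Pow \<Omega>"
  using semiring_of_sets.axioms(1)[OF assms] semiring_of_sets.Int[OF assms]
  by (auto simp: Int_stable_def subset_class_def)

lemma measure_add_eq_on_generated_sets:
  assumes S: "Int_stable S" "S \<subseteq> Pow (space M)" "space M \<in> S" "sets M = sigma_sets (space M) S"
    and fin: "finite_measure N" "finite_measure \<nu>" "finite_measure \<mu>"
    and sets: "sets N = sets M" "sets \<nu> = sets M" "sets \<mu> = sets M"
    and eq: "\<And>s. s \<in> S \<Longrightarrow> measure N s + measure \<nu> s = measure \<mu> s"
    and X: "X \<in> sets M"
  shows "measure N X + measure \<nu> X = measure \<mu> X"
proof -
  have measure_compl: "measure K (space M - A) = measure K (space M) - measure K A"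
    if "finite_measure K" "sets K = sets M" "A \<in> sets M" for K A
    using finite_measure.finite_measure_compl[OF that(1)] sets_eq_imp_space_eq[OF that(2)] that(2,3)
    by simp
  have measure_sums: "(\<lambda>i. measure K (A i)) sums measure K (\<Union>i. A i)"
    if "finite_measure K" "sets K = sets M" "range A \<subseteq> sets M" "disjoint_family A" for K A
    using that by (intro measure_UNION) (auto simp: finite_measure.emeasure_finite)
  from S(1,2) X[unfolded S(4)] show ?thesis
  proof (induction rule: sigma_sets_induct_disjoint)
    case (basic A)
    then show ?case by (rule eq)
  next
    case empty
    then show ?case by simp
  next
    case (compl A)
    then show ?case
      using measure_compl[OF fin(1) sets(1)] measure_compl[OF fin(2) sets(2)]
        measure_compl[OF fin(3) sets(3)] eq[OF S(3)] S(4)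
      by simp
  next
    case (union A)
    then have "range A \<subseteq> sets M"
      using S(4) by simp
    then have "(\<lambda>i. measure N (A i) + measure \<nu> (A i)) sums (measure N (\<Union>i. A i) + measure \<nu> (\<Union>i. A i))"
      "(\<lambda>i. measure \<mu> (A i)) sums measure \<mu> (\<Union>i. A i)"
      using measure_sums[OF fin(1) sets(1)] measure_sums[OF fin(2) sets(2)]
        measure_sums[OF fin(3) sets(3)] union(1)
      by (auto intro: sums_add)
    then show ?case
      using union(3) sums_unique2 by simp
  qed
qed

lemma finite_measure_le_if_le_on_semiring:
  assumes S: "semiring_of_sets (space M) S" "space M \<in> S" "sets M = sigma_sets (space M) S"
    and fin: "finite_measure \<mu>" "finite_measure \<nu>" and sets: "sets \<mu> = sets M" "sets \<nu> = sets M"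
    and le: "\<And>s. s \<in> S \<Longrightarrow> measure \<nu> s \<le> measure \<mu> s"
    and X: "X \<in> sets M"
  shows "measure \<nu> X \<le> measure \<mu> X"
proof -
  have "S \<subseteq> sets M"
    using S(3) sigma_sets_superset_generator by blast
  then have measure_sums: "(\<lambda>n. measure K (F n)) sums measure K (\<Union>n. F n)"
    if "finite_measure K" "sets K = sets M" "range F \<subseteq> S" "disjoint_family F" for K F
    using that by (intro measure_UNION) (auto simp: finite_measure.emeasure_finite)
  have additive: "(\<lambda>n. measure \<mu> (F n) - measure \<nu> (F n))
      sums (measure \<mu> (\<Union>n. F n) - measure \<nu> (\<Union>n. F n))"
    if "range F \<subseteq> S" "disjoint_family F" "(\<Union>n. F n) \<in> S" for F
    using measure_sums[OF fin(1) sets(1) that(1,2)] measure_sums[OF fin(2) sets(2) that(1,2)]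
    by (rule sums_diff)
  have nonneg: "0 \<le> measure \<mu> s - measure \<nu> s" if "s \<in> S" for s
    using le[OF that] by simp
  have "measure \<mu> {} - measure \<nu> {} = 0"
    by simp
  then obtain N where N: "sets N = sigma_sets (space M) S" "finite_measure N"
      "\<And>s. s \<in> S \<Longrightarrow> measure N s = measure \<mu> s - measure \<nu> s"
    using semiring_premeasure_extension[OF S(1,2) _ nonneg additive] by blast
  have "measure N X + measure \<nu> X = measure \<mu> X"
  proof (rule measure_add_eq_on_generated_sets[OF semiring_of_sets_Int_stable[OF S(1)] S(2,3) N(2)
        fin(2,1) _ sets(2,1) _ X])
    show "sets N = sets M"
      using N(1) S(3) by simp
    show "measure N s + measure \<nu> s = measure \<mu> s" if "s \<in> S" for s
      using N(3)[OF that] by simp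
  qed
  then show ?thesis
    using measure_nonneg[of N X] by linarith
qed

lemma finite_measure_density_indicator:
  assumes "finite_measure M" "B \<in> sets M"
  shows "finite_measure (density M (indicator B))"
    and "X \<in> sets M \<Longrightarrow> measure (density M (indicator B)) X = measure M (B \<inter> X)"
proof -
  have "emeasure (density M (indicator B)) (space (density M (indicator B))) = emeasure M (B \<inter> space M)"
    using emeasure_restricted[OF assms(2) sets.top] by simp
  then show "finite_measure (density M (indicator B))"
    using finite_measure.emeasure_finite[OF assms(1)] by (intro finite_measureI) simp
  show "measure (density M (indicator B)) X = measure M (B \<inter> X)" if "X \<in> sets M"
    using emeasure_restricted[OF assms(2) that] unfolding measure_def by simp
qed

section \<open>Extremal measures\<close>

lemma chains_SigmaD:
  assumes "I \<in> chains_Sigma M"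
  shows "chain\<^sub>\<subseteq> I" "I \<subseteq> sets M" "I \<subseteq> Pow (space M)" "{} \<in> I" "space M \<in> I"
    and "sigma_sets (space M) I = sets M"
  using assms sets.sets_into_space unfolding chains_Sigma_def chain_subset_def by auto

lemma chain_diffs_generate:
  assumes "I \<in> chains_Sigma M"
  shows "semiring_of_sets (space M) (chain_diffs I)" "Int_stable (chain_diffs I)"
    and "chain_diffs I \<subseteq> Pow (space M)" "space M \<in> chain_diffs I"
    and "sets M = sigma_sets (space M) (chain_diffs I)"
proof -
  note I = chains_SigmaD[OF assms]
  show S: "semiring_of_sets (space M) (chain_diffs I)"
    using semiring_of_sets_chain_diffs[OF I(1,3,4)] .
  show "Int_stable (chain_diffs I)" "chain_diffs I \<subseteq> Pow (space M)"
    using semiring_of_sets_Int_stable[OF S] .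
  show "space M \<in> chain_diffs I"
    using Diff_in_chain_diffs[OF I(1,5,4)] by simp
  show "sets M = sigma_sets (space M) (chain_diffs I)"
    using sigma_sets_chain_diffs[OF I(3,4)] I(6) by simp
qed

lemma gen_alg_chain_diff:
  assumes "I \<in> chains_Sigma M" "C \<in> I" "D \<in> I" "D \<subseteq> C"
  shows "C - D \<in> gen_alg M I" "mu_alg M v I (C - D) = v C - v D"
proof -
  note I = chains_SigmaD[OF assms(1)]
  have rep: "chain_rep I 1 (\<lambda>_. C) (\<lambda>_. D)"
    using assms unfolding chain_rep_def by auto
  have "chain_rep_set 1 (\<lambda>_. C) (\<lambda>_. D) = C - D"
    unfolding chain_rep_set_def by (simp add: lessThan_Suc)
  then show "C - D \<in> gen_alg M I" "mu_alg M v I (C - D) = v C - v D"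
    using gen_alg_eq[OF I(3)] rep mu_alg_chain_rep_set[OF rep I(1,3), of v]
    by (auto simp: chain_rep_sum_def)
qed

lemma chain_diffs_subset_gen_alg:
  assumes "I \<in> chains_Sigma M"
  shows "chain_diffs I \<subseteq> gen_alg M I"
  using gen_alg_chain_diff(1)[OF assms] unfolding chain_diffs_def by blast

lemma measure_chain_rep_set:
  assumes "finite_measure N" "sets N = sets M" "I \<subseteq> sets M" "chain_rep I n C D"
  shows "measure N (chain_rep_set n C D) = (\<Sum>i<n. measure N (C i - D i))"
  unfolding chain_rep_set_def
proof (rule measure_UNION')
  fix i
  assume "i \<in> {..<n}"
  then have "C i - D i \<in> sets N"
    using assms(2-4) unfolding chain_rep_def by auto
  then show "C i - D i \<in> fmeasurable N"
    using finite_measure.fmeasurable_eq_sets[OF assms(1)] by simp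
qed (use chain_rep_pairwise_disjnt[OF assms(4)] in auto)

lemma measure_eq_mu_alg:
  assumes I: "I \<in> chains_Sigma M" and N: "finite_measure N" "sets N = sets M"
    and diffs: "\<And>C D. C \<in> I \<Longrightarrow> D \<in> I \<Longrightarrow> D \<subseteq> C \<Longrightarrow> measure N (C - D) = v C - v D"
    and A: "A \<in> gen_alg M I"
  shows "measure N A = mu_alg M v I A"
proof -
  note I = chains_SigmaD[OF I]
  obtain n C D where rep: "chain_rep I n C D" and A_eq: "A = chain_rep_set n C D"
    using A gen_alg_eq[OF I(3)] by blast
  have "measure N A = (\<Sum>i<n. measure N (C i - D i))"
    unfolding A_eq by (rule measure_chain_rep_set[OF N I(2) rep])
  also have "\<dots> = chain_rep_sum v n C D"
    unfolding chain_rep_sum_def using rep diffs by (auto simp: chain_rep_def intro!: sum.cong)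
  also have "\<dots> = mu_alg M v I A"
    unfolding A_eq by (rule mu_alg_chain_rep_set[OF rep I(1,3), symmetric])
  finally show ?thesis .
qed

lemma chains_Sigma_refine:
  assumes I: "I \<in> chains_Sigma M" and EF: "E \<in> sets M" "F \<in> sets M" "E \<subseteq> F"
  obtains I' where "I' \<in> chains_Sigma M" "E \<in> I'" "F \<in> I'" "\<forall>C\<in>I. E \<inter> C \<in> I'"
proof -
  note I = chains_SigmaD[OF I]
  \<comment> \<open>Three copies of I, squeezed below E, between E and F, and above F.\<close>
  define I' where "I' = (\<lambda>C. E \<inter> C) ` I \<union> (\<lambda>C. E \<union> (F \<inter> C)) ` I \<union> (\<lambda>C. F \<union> C) ` I"
  have members: "E \<inter> C \<in> I'" "E \<union> (F \<inter> C) \<in> I'" "F \<union> C \<in> I'" if "C \<in> I" for C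
    using that unfolding I'_def by blast+
  have "E \<subseteq> space M" "F \<subseteq> space M"
    using EF sets.sets_into_space by auto
  then have E: "E \<in> I'" and F: "F \<in> I'" and "{} \<in> I'" "space M \<in> I'"
    using members[OF I(5)] members[OF I(4)] EF(3) by (auto simp: Int_absorb2 Un_absorb1)
  have "I' \<subseteq> sets M"
    unfolding I'_def using I(2) EF by auto
  have "chain\<^sub>\<subseteq> I'"
    using I(1) EF(3) unfolding chain_subset_def I'_def by blast
  have "sigma_sets (space M) I' = sets M"
  proof
    show "sigma_sets (space M) I' \<subseteq> sets M"
      using sets.sigma_sets_subset[OF \<open>I' \<subseteq> sets M\<close>] .
    interpret sigma_algebra "space M" "sigma_sets (space M) I'"
      using \<open>I' \<subseteq> sets M\<close> sets.sets_into_space by (intro sigma_algebra_sigma_sets) auto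
    have "C \<in> sigma_sets (space M) I'" if "C \<in> I" for C
    proof -
      have "C = (E \<inter> C) \<union> ((E \<union> (F \<inter> C)) - E) \<union> ((F \<union> C) - F)"
        using that I(3) EF(3) by blast
      then show ?thesis
        using members[OF that] E F by (metis Diff Un sigma_sets.Basic)
    qed
    then show "sets M \<subseteq> sigma_sets (space M) I'"
      using sigma_sets_mono I(6) by (metis subsetI)
  qed
  then have "I' \<in> chains_Sigma M"
    using \<open>I' \<subseteq> sets M\<close> \<open>chain\<^sub>\<subseteq> I'\<close> \<open>{} \<in> I'\<close> \<open>space M \<in> I'\<close>
    unfolding chains_Sigma_def chain_subset_def by blast
  then show thesis
    using that E F members(1) by blast
qed

lemma supermodular_Diff_Int_le:
  assumes "nondecreasing_sf M v" "supermodular_sf M v"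
    and "B \<in> sets M" "C \<in> sets M" "D \<in> sets M" "D \<subseteq> C"
  shows "v (B \<inter> C) - v (B \<inter> D) \<le> v C - v D"
proof -
  have BC: "B \<inter> C \<in> sets M" and DBC: "D \<union> (B \<inter> C) \<in> sets M" "D \<union> (B \<inter> C) \<subseteq> C"
    using assms(3-6) by auto
  have "v D + v (B \<inter> C) \<le> v (D \<union> (B \<inter> C)) + v (D \<inter> (B \<inter> C))"
    using assms(2) BC assms(5) unfolding supermodular_sf_def by blast
  moreover have "D \<inter> (B \<inter> C) = B \<inter> D"
    using assms(6) by blast
  ultimately have "v D + v (B \<inter> C) \<le> v (D \<union> (B \<inter> C)) + v (B \<inter> D)"
    by simp
  moreover have "v (D \<union> (B \<inter> C)) \<le> v C"
    using assms(1,4) DBC unfolding nondecreasing_sf_def by blast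
  ultimately show ?thesis
    by linarith
qed

lemma supermodular_if_core_plus_INF_eq:
  assumes "\<And>A B. A \<in> sets M \<Longrightarrow> B \<in> sets M \<Longrightarrow> B \<subseteq> A \<Longrightarrow>
             ereal (v B) = (INF N\<in>core_plus M v A. ereal (measure N B))"
  shows "supermodular_sf M v"
  unfolding supermodular_sf_def
proof (intro ballI)
  fix A B
  assume A: "A \<in> sets M" and B: "B \<in> sets M"
  have "A \<union> B \<in> sets M"
    using A B by auto
  then have AB: "A \<in> sets N" "B \<in> sets N" if "N \<in> core_plus M v (A \<union> B)" for N
    using that A B sets.sets_into_space unfolding core_plus_def
    by (auto simp: sets_restrict_space_iff Int_absorb2)
  have "ereal (v A + v B - v (A \<union> B)) \<le> (INF N\<in>core_plus M v (A \<union> B). ereal (measure N (A \<inter> B)))"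
  proof (rule INF_greatest)
    fix N
    assume N: "N \<in> core_plus M v (A \<union> B)"
    then have "finite_measure N"
      unfolding core_plus_def by auto
    then have "measure N (A \<union> B) = measure N A + measure N B - measure N (A \<inter> B)"
      using AB[OF N] by (simp add: measure_Un3 finite_measure.fmeasurable_eq_sets)
    moreover have "measure N (A \<union> B) = v (A \<union> B)" "v A \<le> measure N A" "v B \<le> measure N B"
      using N A B unfolding core_plus_def by auto
    ultimately show "ereal (v A + v B - v (A \<union> B)) \<le> ereal (measure N (A \<inter> B))"
      by simp
  qed
  also have "\<dots> = ereal (v (A \<inter> B))"
    using A B by (intro assms[symmetric]) auto
  finally show "v A + v B \<le> v (A \<union> B) + v (A \<inter> B)"
    by simp
qed

locale continuous_capacity =
  fixes M :: "'a measure" and v :: "'a set \<Rightarrow> real"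
  assumes nondecreasing: "nondecreasing_sf M v"
    and continuous: "continuous_sf M v"
    and v_empty: "v {} = 0"
begin

lemma extremal_measure_exists:
  assumes I: "I \<in> chains_Sigma M"
  obtains N where "sets N = sets M" "finite_measure N"
    "\<And>C D. C \<in> I \<Longrightarrow> D \<in> I \<Longrightarrow> D \<subseteq> C \<Longrightarrow> measure N (C - D) = v C - v D"
proof -
  note I' = chains_SigmaD[OF I] and S = chain_diffs_generate[OF I]
  have nonneg: "0 \<le> mu_alg M v I s" if "s \<in> chain_diffs I" for s
  proof -
    obtain C D where s: "s = C - D" "C \<in> I" "D \<in> I" "D \<subseteq> C"
      using \<open>s \<in> chain_diffs I\<close> by (rule chain_diffsE)
    then have "v D \<le> v C"
      using nondecreasing I'(2) unfolding nondecreasing_sf_def by blast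
    then show ?thesis
      using gen_alg_chain_diff(2)[OF I s(2-4)] s(1) by simp
  qed
  have empty: "mu_alg M v I {} = 0"
    using gen_alg_chain_diff(2)[OF I I'(4,4)] by simp
  have additive: "(\<lambda>n. mu_alg M v I (F n)) sums mu_alg M v I (\<Union>n. F n)"
    if "range F \<subseteq> chain_diffs I" "disjoint_family F" "(\<Union>n. F n) \<in> chain_diffs I" for F
  proof -
    have "range F \<subseteq> gen_alg M I" "(\<Union>n. F n) \<in> gen_alg M I"
      using that(1,3) chain_diffs_subset_gen_alg[OF I] by (blast, blast)
    with continuous I that(2) show ?thesis
      unfolding continuous_sf_def by blast
  qed
  obtain N where N: "sets N = sigma_sets (space M) (chain_diffs I)" "finite_measure N"
      "\<And>s. s \<in> chain_diffs I \<Longrightarrow> measure N s = mu_alg M v I s"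
    using semiring_premeasure_extension[OF S(1,4) empty nonneg additive] by blast
  show thesis
  proof (rule that)
    show "sets N = sets M"
      using N(1) S(5) by simp
    show "finite_measure N"
      by (rule N(2))
    fix C D
    assume CD: "C \<in> I" "D \<in> I" "D \<subseteq> C"
    have "measure N (C - D) = mu_alg M v I (C - D)"
      by (rule N(3)[OF Diff_in_chain_diffs[OF I'(1) CD(1,2)]])
    then show "measure N (C - D) = v C - v D"
      unfolding gen_alg_chain_diff(2)[OF I CD] .
  qed
qed

lemma extremal_measure:
  assumes I: "I \<in> chains_Sigma M"
  shows "sets (extremal_measure M v I) = sets M" "finite_measure (extremal_measure M v I)"
    and "\<And>C D. C \<in> I \<Longrightarrow> D \<in> I \<Longrightarrow> D \<subseteq> C \<Longrightarrow> measure (extremal_measure M v I) (C - D) = v C - v D"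
proof -
  define P where "P N \<longleftrightarrow> sets N = sets M \<and> finite_measure N
      \<and> (\<forall>A\<in>gen_alg M I. measure N A = mu_alg M v I A)" for N
  note S = chain_diffs_generate[OF I]
  obtain N0 where N0: "sets N0 = sets M" "finite_measure N0"
      "\<And>C D. C \<in> I \<Longrightarrow> D \<in> I \<Longrightarrow> D \<subseteq> C \<Longrightarrow> measure N0 (C - D) = v C - v D"
    using extremal_measure_exists[OF I] by blast
  have "P N0"
    unfolding P_def using N0(1,2) measure_eq_mu_alg[OF I N0(2,1) N0(3)] by blast
  moreover have "N = N0" if "P N" for N
  proof (rule measure_eqI_generator_eq[OF S(2,3), where A="\<lambda>_. space M"])
    fix X
    assume "X \<in> chain_diffs I"
    then have "X \<in> gen_alg M I"
      using chain_diffs_subset_gen_alg[OF I] by blast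
    then show "emeasure N X = emeasure N0 X"
      using \<open>P N\<close> \<open>P N0\<close> unfolding P_def by (metis finite_measure.emeasure_eq_measure)
  next
    show "sets N = sigma_sets (space M) (chain_diffs I)" "sets N0 = sigma_sets (space M) (chain_diffs I)"
      using \<open>P N\<close> \<open>P N0\<close> S(5) unfolding P_def by auto
    show "range (\<lambda>_. space M) \<subseteq> chain_diffs I" "(\<Union>i::nat. space M) = space M"
      using S(4) by auto
    show "emeasure N (space M) \<noteq> \<infinity>" for i :: nat
      using \<open>P N\<close> unfolding P_def by (simp add: finite_measure.emeasure_finite)
  qed
  ultimately have P: "P (extremal_measure M v I)"
    unfolding extremal_measure_def P_def[symmetric] by (rule theI)
  then show "sets (extremal_measure M v I) = sets M" "finite_measure (extremal_measure M v I)"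
    unfolding P_def by auto
  show "measure (extremal_measure M v I) (C - D) = v C - v D" if "C \<in> I" "D \<in> I" "D \<subseteq> C" for C D
    using P gen_alg_chain_diff[OF I that] unfolding P_def by simp
qed

lemma extremal_measure_chain:
  assumes "I \<in> chains_Sigma M" "X \<in> I"
  shows "measure (extremal_measure M v I) X = v X"
  using extremal_measure(3)[OF assms(1,2) chains_SigmaD(4)[OF assms(1)]] v_empty by simp

lemma extremal_measure_ge_if_supermodular:
  assumes sm: "supermodular_sf M v" and I: "I \<in> chains_Sigma M" and B: "B \<in> sets M"
  shows "v B \<le> measure (extremal_measure M v I) B"
proof -
  obtain I' where I': "I' \<in> chains_Sigma M" "B \<in> I'" "\<forall>C\<in>I. B \<inter> C \<in> I'"
    by (rule chains_Sigma_refine[OF I B B subset_refl]) (rule that)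
  define \<mu> where "\<mu> = extremal_measure M v I"
  define \<kappa> where "\<kappa> = extremal_measure M v I'"
  note \<mu> = extremal_measure[OF I, folded \<mu>_def]
  note \<kappa> = extremal_measure[OF I'(1), folded \<kappa>_def]
  let ?\<kappa>B = "density \<kappa> (indicator B)"
  have B_\<kappa>: "B \<in> sets \<kappa>"
    using B \<kappa>(1) by simp
  note \<kappa>B = finite_measure_density_indicator[OF \<kappa>(2) B_\<kappa>]
  have le_diffs: "measure ?\<kappa>B s \<le> measure \<mu> s" if "s \<in> chain_diffs I" for s
  proof -
    obtain C D where s: "s = C - D" "C \<in> I" "D \<in> I" "D \<subseteq> C"
      using \<open>s \<in> chain_diffs I\<close> by (rule chain_diffsE)
    have CD: "C \<in> sets M" "D \<in> sets M"
      using s(2,3) chains_SigmaD(2)[OF I] by auto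
    have "s \<in> sets \<kappa>"
      using CD s(1) \<kappa>(1) by auto
    moreover have "B \<inter> s = (B \<inter> C) - (B \<inter> D)"
      using s(1) by blast
    ultimately have "measure ?\<kappa>B s = measure \<kappa> ((B \<inter> C) - (B \<inter> D))"
      using \<kappa>B(2) by simp
    also have "\<dots> = v (B \<inter> C) - v (B \<inter> D)"
      by (rule \<kappa>(3)) (use I'(3) s(2-4) in auto)
    also have "\<dots> \<le> v C - v D"
      by (rule supermodular_Diff_Int_le[OF nondecreasing sm B CD s(4)])
    also have "\<dots> = measure \<mu> s"
      using \<mu>(3)[OF s(2-4)] s(1) by simp
    finally show ?thesis .
  qed
  have "sets ?\<kappa>B = sets M"
    using \<kappa>(1) by simp
  then have "measure ?\<kappa>B B \<le> measure \<mu> B"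
    by (rule finite_measure_le_if_le_on_semiring[OF chain_diffs_generate(1,4,5)[OF I] \<mu>(2) \<kappa>B(1)
          \<mu>(1) _ le_diffs B])
  then show ?thesis
    using \<kappa>B(2)[OF B_\<kappa>] extremal_measure_chain[OF I'(1,2)] unfolding \<mu>_def \<kappa>_def by simp
qed

lemma supermodular_if_extremal_measure_ge:
  assumes "chains_Sigma M \<noteq> {}"
    and ge: "\<And>I B. I \<in> chains_Sigma M \<Longrightarrow> B \<in> sets M \<Longrightarrow> v B \<le> measure (extremal_measure M v I) B"
  shows "supermodular_sf M v"
  unfolding supermodular_sf_def
proof (intro ballI)
  fix A B
  assume A: "A \<in> sets M" and B: "B \<in> sets M"
  obtain I0 where "I0 \<in> chains_Sigma M"
    using assms(1) by blast
  then obtain I where I: "I \<in> chains_Sigma M" "A \<inter> B \<in> I" "A \<union> B \<in> I"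
    using chains_Sigma_refine[of I0 M "A \<inter> B" "A \<union> B"] A B by blast
  define \<mu> where "\<mu> = extremal_measure M v I"
  have "finite_measure \<mu>" "sets \<mu> = sets M"
    unfolding \<mu>_def using extremal_measure[OF I(1)] by auto
  then have "measure \<mu> (A \<union> B) = measure \<mu> A + measure \<mu> B - measure \<mu> (A \<inter> B)"
    using A B by (simp add: measure_Un3 finite_measure.fmeasurable_eq_sets)
  moreover have "measure \<mu> (A \<union> B) = v (A \<union> B)" "measure \<mu> (A \<inter> B) = v (A \<inter> B)"
    unfolding \<mu>_def using extremal_measure_chain I by auto
  moreover have "v A \<le> measure \<mu> A" "v B \<le> measure \<mu> B"
    unfolding \<mu>_def using ge I(1) A B by auto
  ultimately show "v A + v B \<le> v (A \<union> B) + v (A \<inter> B)"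
    by linarith
qed

lemma supermodular_iff_extremal_measure_ge:
  assumes "chains_Sigma M \<noteq> {}"
  shows "supermodular_sf M v \<longleftrightarrow>
    (\<forall>I\<in>chains_Sigma M. \<forall>B\<in>sets M. v B \<le> measure (extremal_measure M v I) B)"
  using extremal_measure_ge_if_supermodular supermodular_if_extremal_measure_ge[OF assms] by blast

lemma extremal_measure_in_core_plus_iff:
  assumes I: "I \<in> chains_Sigma M"
  shows "extremal_measure M v I \<in> core_plus M v (space M) \<longleftrightarrow>
    (\<forall>B\<in>sets M. v B \<le> measure (extremal_measure M v I) B)"
proof -
  have "sets (restrict_space M (space M)) = sets M"
    using sets_restrict_space_iff[of "space M" M] sets.sets_into_space by auto
  then have "extremal_measure M v I \<in> core_plus M v (space M) \<longleftrightarrow>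
      (\<forall>B\<in>sets M. B \<subseteq> space M \<longrightarrow> v B \<le> measure (extremal_measure M v I) B)"
    using extremal_measure(1,2)[OF I] extremal_measure_chain[OF I chains_SigmaD(5)[OF I]]
    unfolding core_plus_def by simp
  then show ?thesis
    using sets.sets_into_space by blast
qed

lemma INF_extremal_measure_eq_iff:
  assumes "chains_Sigma M \<noteq> {}" "A \<in> sets M"
  shows "ereal (v A) = (INF I\<in>chains_Sigma M. ereal (measure (extremal_measure M v I) A)) \<longleftrightarrow>
    (\<forall>I\<in>chains_Sigma M. v A \<le> measure (extremal_measure M v I) A)"
proof -
  obtain I0 where "I0 \<in> chains_Sigma M"
    using assms(1) by blast
  then obtain I where I: "I \<in> chains_Sigma M" "A \<in> I"
    using chains_Sigma_refine[OF _ assms(2,2)] by blast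
  have "(INF J\<in>chains_Sigma M. ereal (measure (extremal_measure M v J) A))
          \<le> ereal (measure (extremal_measure M v I) A)"
    using I(1) by (rule INF_lower)
  then have le: "(INF J\<in>chains_Sigma M. ereal (measure (extremal_measure M v J) A)) \<le> ereal (v A)"
    using extremal_measure_chain[OF I] by simp
  have "ereal (v A) = (INF J\<in>chains_Sigma M. ereal (measure (extremal_measure M v J) A)) \<longleftrightarrow>
      ereal (v A) \<le> (INF J\<in>chains_Sigma M. ereal (measure (extremal_measure M v J) A))"
    using le by (metis order.antisym order.refl)
  also have "\<dots> \<longleftrightarrow> (\<forall>J\<in>chains_Sigma M. v A \<le> measure (extremal_measure M v J) A)"
    by (simp add: le_INF_iff)
  finally show ?thesis .
qed

lemma core_plus_INF_eq_if_supermodular: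
  assumes sm: "supermodular_sf M v" and "chains_Sigma M \<noteq> {}"
    and A: "A \<in> sets M" and B: "B \<in> sets M" "B \<subseteq> A"
  shows "ereal (v B) = (INF N\<in>core_plus M v A. ereal (measure N B))"
proof (rule antisym)
  show "ereal (v B) \<le> (INF N\<in>core_plus M v A. ereal (measure N B))"
  proof (rule INF_greatest)
    fix N
    assume "N \<in> core_plus M v A"
    then show "ereal (v B) \<le> ereal (measure N B)"
      using B unfolding core_plus_def by simp
  qed
  obtain I0 where "I0 \<in> chains_Sigma M"
    using assms(2) by blast
  then obtain I where I: "I \<in> chains_Sigma M" "B \<in> I" "A \<in> I"
    using chains_Sigma_refine[OF _ B(1) A B(2)] by blast
  define \<mu> where "\<mu> = extremal_measure M v I"
  note \<mu> = extremal_measure(1,2)[OF I(1), folded \<mu>_def]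
  have A_\<mu>: "A \<in> sets \<mu>" "A \<inter> space \<mu> \<in> sets \<mu>"
    using A \<mu>(1) by auto
  define N where "N = restrict_space \<mu> A"
  have measure_N: "measure N X = measure \<mu> X" if "X \<subseteq> A" for X
    unfolding N_def using A_\<mu>(2) that by (rule measure_restrict_space)
  have "N \<in> core_plus M v A"
    unfolding core_plus_def
  proof (intro CollectI conjI ballI impI)
    show "sets N = sets (restrict_space M A)"
      unfolding N_def sets_restrict_space \<mu>(1) ..
    show "finite_measure N"
      unfolding N_def using \<mu>(2) A_\<mu>(1) by (rule finite_measure_restrict_space)
    show "measure N A = v A"
      using measure_N[of A] extremal_measure_chain[OF I(1,3)] unfolding \<mu>_def by simp
    show "v B' \<le> measure N B'" if "B' \<in> sets M" "B' \<subseteq> A" for B'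
      using measure_N[OF that(2)] extremal_measure_ge_if_supermodular[OF sm I(1) that(1)]
      unfolding \<mu>_def by simp
  qed
  then have "(INF N\<in>core_plus M v A. ereal (measure N B)) \<le> ereal (measure N B)"
    by (rule INF_lower)
  also have "\<dots> = ereal (v B)"
    using measure_N[OF B(2)] extremal_measure_chain[OF I(1,2)] unfolding \<mu>_def by simp
  finally show "(INF N\<in>core_plus M v A. ereal (measure N B)) \<le> ereal (v B)" .
qed

lemma supermodular_iff_extremal_measures_in_core_plus:
  assumes "chains_Sigma M \<noteq> {}"
  shows "supermodular_sf M v \<longleftrightarrow>
    (\<forall>I\<in>chains_Sigma M. extremal_measure M v I \<in> core_plus M v (space M))"
  unfolding supermodular_iff_extremal_measure_ge[OF assms]
  by (rule ball_cong[OF refl extremal_measure_in_core_plus_iff[symmetric]])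

lemma supermodular_iff_INF_extremal_measures_eq:
  assumes "chains_Sigma M \<noteq> {}"
  shows "supermodular_sf M v \<longleftrightarrow>
    (\<forall>A\<in>sets M. ereal (v A) = (INF I\<in>chains_Sigma M. ereal (measure (extremal_measure M v I) A)))"
proof -
  have "(\<forall>A\<in>sets M. ereal (v A) = (INF I\<in>chains_Sigma M. ereal (measure (extremal_measure M v I) A)))
      \<longleftrightarrow> (\<forall>A\<in>sets M. \<forall>I\<in>chains_Sigma M. v A \<le> measure (extremal_measure M v I) A)"
    by (rule ball_cong[OF refl INF_extremal_measure_eq_iff[OF assms]])
  then show ?thesis
    unfolding supermodular_iff_extremal_measure_ge[OF assms] by blast
qed

lemma supermodular_iff_core_plus_INF_eq:
  assumes "chains_Sigma M \<noteq> {}"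
  shows "supermodular_sf M v \<longleftrightarrow> (\<forall>A\<in>sets M. \<forall>B\<in>sets M. B \<subseteq> A \<longrightarrow>
    ereal (v B) = (INF N\<in>core_plus M v A. ereal (measure N B)))"
proof
  assume "supermodular_sf M v"
  then show "\<forall>A\<in>sets M. \<forall>B\<in>sets M. B \<subseteq> A \<longrightarrow>
      ereal (v B) = (INF N\<in>core_plus M v A. ereal (measure N B))"
    using core_plus_INF_eq_if_supermodular[OF _ assms] by blast
qed (rule supermodular_if_core_plus_INF_eq, blast)

end

theorem corollary8:
  fixes M :: "'a measure" and v :: "'a set \<Rightarrow> real"
  assumes "chains_Sigma M \<noteq> {}"
    and "nondecreasing_sf M v"
    and "continuous_sf M v"
    and "v {} = 0"
  shows "(supermodular_sf M v
          \<longleftrightarrow> (\<forall>I\<in>chains_Sigma M. extremal_measure M v I \<in> core_plus M v (space M)))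
       \<and> (supermodular_sf M v
          \<longleftrightarrow> (\<forall>A\<in>sets M. ereal (v A) = (INF I\<in>chains_Sigma M. ereal (measure (extremal_measure M v I) A))))
       \<and> (supermodular_sf M v
          \<longleftrightarrow> (\<forall>A\<in>sets M. \<forall>B\<in>sets M. B \<subseteq> A \<longrightarrow>
                ereal (v B) = (INF N\<in>core_plus M v A. ereal (measure N B))))"
proof -
  interpret continuous_capacity M v
    using assms(2-4) by unfold_locales
  show ?thesis
    by (intro conjI supermodular_iff_extremal_measures_in_core_plus
        supermodular_iff_INF_extremal_measures_eq supermodular_iff_core_plus_INF_eq assms(1))
qed

end
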